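(* Let $V$ be a quasi-regular mixed lattice vector space and $A$ a mixed lattice subspace of $V$. Then the right disjoint complement of $A$ satisfies $$A^{\perp}=\{x\in V: s(z)\curlywedge s(x)=0 \text{ for all } z\in A\}.$$
   Context: A mixed lattice vector space is a real vector space $V$ with two partial orderings $\le$ (initial) and $\preceq$ (specific), each compatible with the vector space structure, such that for all $x,y$ the mixed lower envelope $x\curlywedge y=\max\{w: w\preceq x,\ w\le y\}$ and mixed upper envelope $x\curlyvee y=\min\{w: x\preceq w,\ y\le w\}$ exist (max/min with respect to $\le$). $V_{sp}=\{x:0\preceq x\}$, $A_{sp}=A\cap V_{sp}$. $V$ is quasi-regular if $V_{sp}$ is closed under $\curlywedge,\curlyvee$. A mixed lattice subspace is a linear subspace closed under $\curlywedge,\curlyvee$; an ideal is a $(\le)$-order convex mixed lattice subspace. The right disjoint complement $A^{\perp}$ is the smallest ideal of $V$ containing $\{x\in V_{sp}: z\curlywedge x=0 \text{ for all } z\in A_{sp}\}$. The symmetric generalized absolute value is $s(x)=\tfrac12\big((x\curlyvee 0)+(0\curlyvee(-x))+((-x)\curlyvee 0)+(0\curlyvee x)\big)$. *)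

theory Defs
  imports Main "HOL.Real_Vector_Spaces"
begin

definition compatible_order :: "('a::real_vector \<Rightarrow> 'a \<Rightarrow> bool) \<Rightarrow> bool" where
  "compatible_order r \<longleftrightarrow>
     (\<forall>x. r x x) \<and> (\<forall>x y. r x y \<and> r y x \<longrightarrow> x = y) \<and>
     (\<forall>x y z. r x y \<and> r y z \<longrightarrow> r x z) \<and>
     (\<forall>x y z. r x y \<longrightarrow> r (x + z) (y + z)) \<and>
     (\<forall>x y (c::real). r x y \<and> 0 \<le> c \<longrightarrow> r (c *\<^sub>R x) (c *\<^sub>R y))"

definition is_mlow :: "('a \<Rightarrow> 'a \<Rightarrow> bool) \<Rightarrow> ('a \<Rightarrow> 'a \<Rightarrow> bool) \<Rightarrow> 'a \<Rightarrow> 'a \<Rightarrow> 'a \<Rightarrow> bool" where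
  "is_mlow le sle x y w \<longleftrightarrow> sle w x \<and> le w y \<and> (\<forall>v. sle v x \<and> le v y \<longrightarrow> le v w)"

definition is_mup :: "('a \<Rightarrow> 'a \<Rightarrow> bool) \<Rightarrow> ('a \<Rightarrow> 'a \<Rightarrow> bool) \<Rightarrow> 'a \<Rightarrow> 'a \<Rightarrow> 'a \<Rightarrow> bool" where
  "is_mup le sle x y w \<longleftrightarrow> sle x w \<and> le y w \<and> (\<forall>v. sle x v \<and> le y v \<longrightarrow> le w v)"

definition mlow :: "('a \<Rightarrow> 'a \<Rightarrow> bool) \<Rightarrow> ('a \<Rightarrow> 'a \<Rightarrow> bool) \<Rightarrow> 'a \<Rightarrow> 'a \<Rightarrow> 'a" where
  "mlow le sle x y = (THE w. is_mlow le sle x y w)"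

definition mup :: "('a \<Rightarrow> 'a \<Rightarrow> bool) \<Rightarrow> ('a \<Rightarrow> 'a \<Rightarrow> bool) \<Rightarrow> 'a \<Rightarrow> 'a \<Rightarrow> 'a" where
  "mup le sle x y = (THE w. is_mup le sle x y w)"

definition mixed_lattice_vs :: "('a::real_vector \<Rightarrow> 'a \<Rightarrow> bool) \<Rightarrow> ('a \<Rightarrow> 'a \<Rightarrow> bool) \<Rightarrow> bool" where
  "mixed_lattice_vs le sle \<longleftrightarrow> compatible_order le \<and> compatible_order sle \<and>
     (\<forall>x y. \<exists>w. is_mlow le sle x y w) \<and> (\<forall>x y. \<exists>w. is_mup le sle x y w)"

definition Vsp :: "('a::real_vector \<Rightarrow> 'a \<Rightarrow> bool) \<Rightarrow> 'a set" where
  "Vsp sle = {x. sle 0 x}"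

definition quasi_regular :: "('a::real_vector \<Rightarrow> 'a \<Rightarrow> bool) \<Rightarrow> ('a \<Rightarrow> 'a \<Rightarrow> bool) \<Rightarrow> bool" where
  "quasi_regular le sle \<longleftrightarrow>
     (\<forall>x\<in>Vsp sle. \<forall>y\<in>Vsp sle. mlow le sle x y \<in> Vsp sle \<and> mup le sle x y \<in> Vsp sle)"

definition linear_subspace :: "'a::real_vector set \<Rightarrow> bool" where
  "linear_subspace S \<longleftrightarrow> 0 \<in> S \<and> (\<forall>x\<in>S. \<forall>y\<in>S. x + y \<in> S) \<and> (\<forall>x\<in>S. \<forall>c::real. c *\<^sub>R x \<in> S)"

definition mixed_lattice_subspace :: "('a::real_vector \<Rightarrow> 'a \<Rightarrow> bool) \<Rightarrow> ('a \<Rightarrow> 'a \<Rightarrow> bool) \<Rightarrow> 'a set \<Rightarrow> bool" where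
  "mixed_lattice_subspace le sle S \<longleftrightarrow> linear_subspace S \<and>
     (\<forall>x\<in>S. \<forall>y\<in>S. mlow le sle x y \<in> S \<and> mup le sle x y \<in> S)"

definition ml_ideal :: "('a::real_vector \<Rightarrow> 'a \<Rightarrow> bool) \<Rightarrow> ('a \<Rightarrow> 'a \<Rightarrow> bool) \<Rightarrow> 'a set \<Rightarrow> bool" where
  "ml_ideal le sle I \<longleftrightarrow> mixed_lattice_subspace le sle I \<and>
     (\<forall>x\<in>I. \<forall>z\<in>I. \<forall>y. le x y \<and> le y z \<longrightarrow> y \<in> I)"

definition right_disj_compl :: "('a::real_vector \<Rightarrow> 'a \<Rightarrow> bool) \<Rightarrow> ('a \<Rightarrow> 'a \<Rightarrow> bool) \<Rightarrow> 'a set \<Rightarrow> 'a set" where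
  "right_disj_compl le sle A =
     \<Inter>{I. ml_ideal le sle I \<and>
           {x\<in>Vsp sle. \<forall>z\<in>A \<inter> Vsp sle. mlow le sle z x = 0} \<subseteq> I}"

definition sabs :: "('a::real_vector \<Rightarrow> 'a \<Rightarrow> bool) \<Rightarrow> ('a \<Rightarrow> 'a \<Rightarrow> bool) \<Rightarrow> 'a \<Rightarrow> 'a" where
  "sabs le sle x = (1/2::real) *\<^sub>R (mup le sle x 0 + mup le sle 0 (- x) + mup le sle (- x) 0 + mup le sle 0 x)"

end

theory Submission
  imports Defs
begin

text \<open>
  With \<open>x\<^sup>+ = 0 \<curlyvee> x\<close> one has \<open>x \<curlyvee> 0 = x + (-x)\<^sup>+\<close>, so \<open>s(x) = x\<^sup>+ + (-x)\<^sup>+\<close>.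
  Hence \<open>s(x)\<close> is specifically positive, \<open>-s(x) \<le> x \<le> s(x)\<close>, \<open>s(u) = u\<close> for \<open>0 \<preceq> u\<close>, and \<open>s\<close> of a
  sum, of a mixed envelope, or of an element of an order interval is bounded by a
  sum of absolute values of the arguments. The set \<open>D\<close> of specifically positive
  elements disjoint from \<open>A\<^sub>s\<^sub>p\<close> is closed under addition and positive scaling and is
  \<open>\<le>\<close>-downward closed in \<open>V\<^sub>s\<^sub>p\<close>, so \<open>{x. s(x) \<in> D}\<close> is an ideal. It contains \<open>D\<close>, and
  every ideal containing \<open>D\<close> contains it because \<open>-s(x) \<le> x \<le> s(x)\<close>. Finally \<open>s\<close> maps
  \<open>A\<close> onto \<open>A\<^sub>s\<^sub>p\<close>. Quasi-regularity is used only through its consequence that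
  \<open>x \<preceq> y\<close> implies \<open>x \<le> y\<close>.
\<close>

lemma compatible_orderD:
  assumes "compatible_order r"
  shows compatible_order_refl: "r x x"
    and compatible_order_antisym: "r x y \<Longrightarrow> r y x \<Longrightarrow> x = y"
    and compatible_order_trans: "r x y \<Longrightarrow> r y z \<Longrightarrow> r x z"
    and compatible_order_add_right: "r x y \<Longrightarrow> r (x + z) (y + z)"
    and compatible_order_scaleR: "r x y \<Longrightarrow> 0 \<le> c \<Longrightarrow> r (c *\<^sub>R x) (c *\<^sub>R y)"
  using assms unfolding compatible_order_def by blast+

lemma compatible_order_add_mono:
  assumes "compatible_order r" and "r a b" and "r c d"
  shows "r (a + c) (b + d)"
  using compatible_order_add_right[OF assms(1,2), of c] compatible_order_add_right[OF assms(1,3), of b]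
    compatible_order_trans[OF assms(1)]
  by (simp add: add.commute)

lemma compatible_order_neg_mono:
  assumes "compatible_order r" and "r x y"
  shows "r (- y) (- x)"
  using compatible_order_add_right[OF assms, of "- x - y"] by simp

locale mixed_lattice_space =
  fixes le sle :: "'a::real_vector \<Rightarrow> 'a \<Rightarrow> bool"
  assumes mixed_lattice: "mixed_lattice_vs le sle"
begin

lemma le_order: "compatible_order le"
  and sle_order: "compatible_order sle"
  using mixed_lattice unfolding mixed_lattice_vs_def by blast+

lemmas le_refl = compatible_order_refl[OF le_order]
  and le_antisym = compatible_order_antisym[OF le_order]
  and le_trans [trans] = compatible_order_trans[OF le_order]
  and le_add_mono = compatible_order_add_mono[OF le_order]
  and le_neg_mono = compatible_order_neg_mono[OF le_order]
  and le_add_right = compatible_order_add_right[OF le_order]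
  and le_scaleR = compatible_order_scaleR[OF le_order]
  and sle_refl = compatible_order_refl[OF sle_order]
  and sle_antisym = compatible_order_antisym[OF sle_order]
  and sle_trans = compatible_order_trans[OF sle_order]
  and sle_add_mono = compatible_order_add_mono[OF sle_order]
  and sle_add_right = compatible_order_add_right[OF sle_order]
  and sle_scaleR = compatible_order_scaleR[OF sle_order]

lemma is_mlow_mlow: "is_mlow le sle x y (mlow le sle x y)"
proof -
  have "\<exists>w. is_mlow le sle x y w" using mixed_lattice unfolding mixed_lattice_vs_def by blast
  moreover have "w = w'" if "is_mlow le sle x y w" "is_mlow le sle x y w'" for w w'
    using that le_antisym unfolding is_mlow_def by blast
  ultimately show ?thesis unfolding mlow_def by (metis theI)
qed

lemma is_mup_mup: "is_mup le sle x y (mup le sle x y)"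
proof -
  have "\<exists>w. is_mup le sle x y w" using mixed_lattice unfolding mixed_lattice_vs_def by blast
  moreover have "w = w'" if "is_mup le sle x y w" "is_mup le sle x y w'" for w w'
    using that le_antisym unfolding is_mup_def by blast
  ultimately show ?thesis unfolding mup_def by (metis theI)
qed

lemma mlow_sle: "sle (mlow le sle x y) x"
  and mlow_le: "le (mlow le sle x y) y"
  and mlow_greatest: "sle v x \<Longrightarrow> le v y \<Longrightarrow> le v (mlow le sle x y)"
  using is_mlow_mlow unfolding is_mlow_def by blast+

lemma mup_sle: "sle x (mup le sle x y)"
  and mup_le: "le y (mup le sle x y)"
  and mup_least: "sle x v \<Longrightarrow> le y v \<Longrightarrow> le (mup le sle x y) v"
  using is_mup_mup unfolding is_mup_def by blast+

lemma mlow_unique: "is_mlow le sle x y w \<Longrightarrow> mlow le sle x y = w"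
  using is_mlow_mlow le_antisym unfolding is_mlow_def by blast

lemma mup_unique: "is_mup le sle x y w \<Longrightarrow> mup le sle x y = w"
  using is_mup_mup le_antisym unfolding is_mup_def by blast

lemma mlow_scaleR:
  assumes "0 < c"
  shows "mlow le sle (c *\<^sub>R x) (c *\<^sub>R y) = c *\<^sub>R mlow le sle x y"
proof (rule mlow_unique)
  have "le v (c *\<^sub>R mlow le sle x y)" if "sle v (c *\<^sub>R x)" "le v (c *\<^sub>R y)" for v
  proof -
    have "le (inverse c *\<^sub>R v) (mlow le sle x y)"
      using sle_scaleR[OF that(1), of "inverse c"] le_scaleR[OF that(2), of "inverse c"] assms
      by (intro mlow_greatest) simp_all
    then have "le (c *\<^sub>R (inverse c *\<^sub>R v)) (c *\<^sub>R mlow le sle x y)"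
      using assms by (intro le_scaleR) simp_all
    then show ?thesis using assms by simp
  qed
  then show "is_mlow le sle (c *\<^sub>R x) (c *\<^sub>R y) (c *\<^sub>R mlow le sle x y)"
    unfolding is_mlow_def using assms by (simp add: sle_scaleR mlow_sle le_scaleR mlow_le)
qed

lemma mlow_nonneg: "sle 0 a \<Longrightarrow> le 0 u \<Longrightarrow> le 0 (mlow le sle a u)"
  by (rule mlow_greatest)

lemma mlow_mono_right: "le u v \<Longrightarrow> le (mlow le sle a u) (mlow le sle a v)"
  by (rule mlow_greatest[OF mlow_sle le_trans[OF mlow_le]])

abbreviation mpos :: "'a \<Rightarrow> 'a" where
  "mpos \<equiv> mup le sle 0"

lemma mpos_sle: "sle 0 (mpos x)"
  and mpos_ge: "le x (mpos x)"
  and mpos_least: "sle 0 c \<Longrightarrow> le x c \<Longrightarrow> le (mpos x) c"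
  by (fact mup_sle mup_le mup_least)+

lemma mpos_mono: "le x y \<Longrightarrow> le (mpos x) (mpos y)"
  by (rule mpos_least[OF mpos_sle le_trans[OF _ mpos_ge]])

lemma mpos_add_le: "le (mpos (x + y)) (mpos x + mpos y)"
  by (rule mpos_least) (simp_all add: sle_add_mono[OF mpos_sle mpos_sle, simplified]
      le_add_mono mpos_ge)

lemma mpos_scaleR:
  assumes "0 < c"
  shows "mpos (c *\<^sub>R x) = c *\<^sub>R mpos x"
proof (rule mup_unique)
  have "le (c *\<^sub>R mpos x) v" if "sle 0 v" "le (c *\<^sub>R x) v" for v
  proof -
    have "le (mpos x) (inverse c *\<^sub>R v)"
      using sle_scaleR[OF that(1), of "inverse c"] le_scaleR[OF that(2), of "inverse c"] assms
      by (intro mpos_least) simp_all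
    then have "le (c *\<^sub>R mpos x) (c *\<^sub>R (inverse c *\<^sub>R v))"
      using assms by (intro le_scaleR) simp_all
    then show ?thesis using assms by simp
  qed
  then show "is_mup le sle 0 (c *\<^sub>R x) (c *\<^sub>R mpos x)"
    unfolding is_mup_def
    using sle_scaleR[OF mpos_sle, of c x] le_scaleR[OF mpos_ge, of c x] assms by simp
qed

lemma mup_zero_right: "mup le sle x 0 = x + mpos (- x)"
proof (rule mup_unique)
  have "le (x + mpos (- x)) v" if "sle x v" "le 0 v" for v
  proof -
    have "le (mpos (- x)) (v - x)"
      using sle_add_right[OF that(1), of "- x"] le_add_right[OF that(2), of "- x"]
      by (intro mpos_least) simp_all
    then show ?thesis using le_add_right[of _ _ x] by (fastforce simp: algebra_simps)
  qed
  then show "is_mup le sle x 0 (x + mpos (- x))"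
    unfolding is_mup_def
    using sle_add_right[OF mpos_sle, of x "- x"] le_add_right[OF mpos_ge[of "- x"], of x]
    by (simp add: add.commute)
qed

lemma sabs_eq_mpos: "sabs le sle x = mpos x + mpos (- x)"
proof -
  have "sabs le sle x = (1/2::real) *\<^sub>R (2 *\<^sub>R (mpos x + mpos (- x)))"
    unfolding sabs_def mup_zero_right by (simp add: algebra_simps scaleR_2)
  then show ?thesis by simp
qed

lemma sabs_minus: "sabs le sle (- x) = sabs le sle x"
  by (simp add: sabs_eq_mpos add.commute)

lemma sabs_sle: "sle 0 (sabs le sle x)"
  unfolding sabs_eq_mpos using sle_add_mono[OF mpos_sle mpos_sle] by simp

lemma sabs_scaleR:
  assumes "0 < c"
  shows "sabs le sle (c *\<^sub>R x) = c *\<^sub>R sabs le sle x"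
  using mpos_scaleR[OF assms, of x] mpos_scaleR[OF assms, of "- x"]
  by (simp add: sabs_eq_mpos scaleR_add_right)

lemma sabs_scaleR_neg:
  assumes "c < 0"
  shows "sabs le sle (c *\<^sub>R x) = (- c) *\<^sub>R sabs le sle x"
  using sabs_scaleR[of "- c" "- x"] sabs_minus assms by simp

lemma mixed_lattice_subspace_sabs:
  assumes "mixed_lattice_subspace le sle A" and "x \<in> A"
  shows "sabs le sle x \<in> A"
proof -
  have "0 \<in> A" and "- x \<in> A" and "\<And>y z. y \<in> A \<Longrightarrow> z \<in> A \<Longrightarrow> y + z \<in> A"
    using assms scaleR_minus1_left[of x]
    unfolding mixed_lattice_subspace_def linear_subspace_def by metis+
  moreover have "\<And>y z. y \<in> A \<Longrightarrow> z \<in> A \<Longrightarrow> mup le sle y z \<in> A"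
    using assms(1) unfolding mixed_lattice_subspace_def by blast
  ultimately show ?thesis
    unfolding sabs_eq_mpos using assms(2) by blast
qed

lemma sabs_add_le: "le (sabs le sle (x + y)) (sabs le sle x + sabs le sle y)"
  using le_add_mono[OF mpos_add_le[of x y] mpos_add_le[of "- x" "- y"]]
  by (simp add: sabs_eq_mpos algebra_simps)

lemma quasi_regular_sle_le:
  assumes "quasi_regular le sle" and "sle x y"
  shows "le x y"
proof -
  have "sle 0 (y - x)" using sle_add_right[OF assms(2), of "- x"] by simp
  then have "sle 0 (mlow le sle 0 (y - x))"
    using assms(1) sle_refl unfolding quasi_regular_def Vsp_def by blast
  then have "mlow le sle 0 (y - x) = 0"
    using sle_antisym mlow_sle by blast
  then show ?thesis using le_add_right[OF mlow_le[of 0 "y - x"], of x] by simp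
qed

end

locale mixed_lattice_space_sle_le = mixed_lattice_space +
  assumes sle_imp_le: "sle x y \<Longrightarrow> le x y"
begin

lemma mpos_nonneg: "le 0 (mpos x)"
  by (rule sle_imp_le[OF mpos_sle])

lemma mpos_eq_self: "sle 0 x \<Longrightarrow> mpos x = x"
  by (rule mup_unique) (simp add: is_mup_def le_refl)

lemma mpos_neg_eq_0: "sle 0 x \<Longrightarrow> mpos (- x) = 0"
  by (rule mup_unique)
    (auto simp: is_mup_def sle_refl sle_imp_le le_neg_mono[OF sle_imp_le, of 0 x, simplified])

lemma sabs_eq_self: "sle 0 x \<Longrightarrow> sabs le sle x = x"
  by (simp add: sabs_eq_mpos mpos_eq_self mpos_neg_eq_0)

lemma mpos_le_sabs: "le (mpos x) (sabs le sle x)"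
  unfolding sabs_eq_mpos using le_add_mono[OF le_refl mpos_nonneg, of "mpos x" "- x"] by simp

lemma sabs_ge: "le x (sabs le sle x)"
  by (rule le_trans[OF mpos_ge mpos_le_sabs])

lemma sabs_ge_neg: "le (- sabs le sle x) x"
  using le_neg_mono[OF sabs_ge[of "- x"]] by (simp add: sabs_minus)

lemma sabs_le_of_between:
  assumes "le x y" "le y z"
  shows "le (sabs le sle y) (sabs le sle z + sabs le sle x)"
proof -
  have "le (mpos y) (sabs le sle z)"
    by (rule le_trans[OF mpos_mono[OF assms(2)] mpos_le_sabs])
  moreover have "le (mpos (- y)) (sabs le sle x)"
    using le_trans[OF mpos_mono[OF le_neg_mono[OF assms(1)]] mpos_le_sabs] by (simp add: sabs_minus)
  ultimately show ?thesis unfolding sabs_eq_mpos[of y] by (rule le_add_mono)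
qed

lemma sabs_mup_le:
  "le (sabs le sle (mup le sle x y)) (sabs le sle x + sabs le sle y + sabs le sle y)"
proof -
  let ?u = "mup le sle x y"
  have "le ?u (x + mpos (- x) + mpos y)"
  proof (rule mup_least)
    show "sle x (x + mpos (- x) + mpos y)"
      using sle_add_right[OF sle_add_mono[OF mpos_sle mpos_sle], of x "- x" y]
      by (simp add: algebra_simps)
    have "le 0 (mpos (- x) + x)"
      using le_add_right[OF mpos_ge[of "- x"], of x] by simp
    from le_add_mono[OF this mpos_ge[of y]]
    show "le y (x + mpos (- x) + mpos y)" by (simp add: algebra_simps)
  qed
  also have "le (x + mpos (- x) + mpos y) (sabs le sle x + mpos y)"
    unfolding sabs_eq_mpos by (intro le_add_mono mpos_ge le_refl)
  finally have "le (mpos ?u) (sabs le sle x + mpos y)"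
    by (rule mpos_least[OF sle_add_mono[OF sabs_sle mpos_sle, simplified]])
  moreover have "le (mpos (- ?u)) (sabs le sle y)"
    using le_trans[OF mpos_mono[OF le_neg_mono[OF mup_le]] mpos_le_sabs] by (simp add: sabs_minus)
  ultimately have "le (sabs le sle ?u) (sabs le sle x + mpos y + sabs le sle y)"
    unfolding sabs_eq_mpos[of ?u] by (rule le_add_mono)
  also have "le \<dots> (sabs le sle x + sabs le sle y + sabs le sle y)"
    by (intro le_add_mono le_refl mpos_le_sabs)
  finally show ?thesis .
qed

lemma sabs_mlow_le:
  "le (sabs le sle (mlow le sle x y)) (sabs le sle x + sabs le sle y + sabs le sle y)"
proof -
  let ?u = "mlow le sle x y" and ?v = "x - mpos x - mpos (- y)"
  have "le ?v ?u"
  proof (rule mlow_greatest)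
    show "sle ?v x"
      using sle_add_right[OF sle_add_mono[OF mpos_sle mpos_sle], of ?v x "- y"]
      by (simp add: algebra_simps)
    show "le ?v y"
      using le_add_right[OF le_add_mono[OF mpos_ge[of x] mpos_ge[of "- y"]], of "y - mpos x - mpos (- y)"]
      by (simp add: algebra_simps)
  qed
  then have "le (- ?u) (mpos x + mpos (- y) + - x)"
    using le_neg_mono[OF \<open>le ?v ?u\<close>] by (simp add: algebra_simps)
  also have "le \<dots> (sabs le sle x + mpos (- y))"
    unfolding sabs_eq_mpos[of x]
    using le_add_mono[OF le_refl[of "mpos x + mpos (- y)"] mpos_ge[of "- x"]]
    by (simp add: algebra_simps)
  finally have "le (mpos (- ?u)) (sabs le sle x + mpos (- y))"
    by (rule mpos_least[OF sle_add_mono[OF sabs_sle mpos_sle, simplified]])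
  with le_trans[OF mpos_mono[OF mlow_le] mpos_le_sabs]
  have "le (sabs le sle ?u) (sabs le sle y + (sabs le sle x + mpos (- y)))"
    unfolding sabs_eq_mpos[of ?u] by (rule le_add_mono)
  also have "le \<dots> (sabs le sle y + (sabs le sle x + sabs le sle y))"
    using mpos_le_sabs[of "- y"] by (intro le_add_mono le_refl) (simp add: sabs_minus)
  finally show ?thesis by (simp add: algebra_simps)
qed

text \<open>
  Subtracting \<open>u\<close> from \<open>w = a \<curlywedge> (u + v)\<close> keeps it specifically below \<open>a\<close>, so
  \<open>w - u \<le> a \<curlywedge> v = 0\<close>; then \<open>w \<le> a \<curlywedge> u = 0\<close>.
\<close>
lemma mlow_add_eq_0:
  assumes "sle 0 a" "sle 0 u" "sle 0 v"
    and "mlow le sle a u = 0" "mlow le sle a v = 0"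
  shows "mlow le sle a (u + v) = 0"
proof -
  let ?w = "mlow le sle a (u + v)"
  have "sle (?w - u) ?w"
    using sle_add_right[OF assms(2), of "?w - u"] by simp
  then have "sle (?w - u) a"
    using sle_trans mlow_sle by blast
  moreover have "le (?w - u) v"
    using le_add_right[OF mlow_le[of a "u + v"], of "- u"] by simp
  ultimately have "le (?w - u) 0"
    using mlow_greatest[of "?w - u" a v] assms(5) by simp
  then have "le ?w u"
    using le_add_right[of "?w - u" 0 u] by simp
  then have "le ?w 0"
    using mlow_greatest[OF mlow_sle, of a "u + v" u] assms(4) by simp
  moreover have "le 0 ?w"
    using mlow_nonneg[OF assms(1) sle_imp_le[OF sle_add_mono[OF assms(2,3), simplified]]] by simp
  ultimately show ?thesis by (rule le_antisym)
qed

lemma ml_ideal_sabs_mem: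
  assumes "ml_ideal le sle I" and "sabs le sle x \<in> I"
  shows "x \<in> I"
proof -
  have "(-1::real) *\<^sub>R sabs le sle x \<in> I"
    using assms unfolding ml_ideal_def mixed_lattice_subspace_def linear_subspace_def by blast
  then have "- sabs le sle x \<in> I" by simp
  moreover have "\<forall>x\<in>I. \<forall>z\<in>I. \<forall>y. le x y \<and> le y z \<longrightarrow> y \<in> I"
    using assms(1) unfolding ml_ideal_def by blast
  ultimately show ?thesis
    using assms(2) sabs_ge_neg sabs_ge by blast
qed

end

definition right_disj_sp :: "('a::real_vector \<Rightarrow> 'a \<Rightarrow> bool) \<Rightarrow> ('a \<Rightarrow> 'a \<Rightarrow> bool) \<Rightarrow> 'a set \<Rightarrow> 'a set" where
  "right_disj_sp le sle A = {x \<in> Vsp sle. \<forall>z \<in> A \<inter> Vsp sle. mlow le sle z x = 0}"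

lemma right_disj_compl_eq_Inter:
  "right_disj_compl le sle A = \<Inter>{I. ml_ideal le sle I \<and> right_disj_sp le sle A \<subseteq> I}"
  unfolding right_disj_compl_def right_disj_sp_def ..

context mixed_lattice_space_sle_le
begin

lemma zero_mem_right_disj_sp: "0 \<in> right_disj_sp le sle A"
  unfolding right_disj_sp_def Vsp_def
  using sle_refl le_antisym[OF mlow_le mlow_nonneg[OF _ le_refl]] by auto

lemma right_disj_sp_add:
  assumes "u \<in> right_disj_sp le sle A" and "v \<in> right_disj_sp le sle A"
  shows "u + v \<in> right_disj_sp le sle A"
  using assms sle_add_mono[of 0 u 0 v] mlow_add_eq_0
  unfolding right_disj_sp_def Vsp_def by auto

lemma right_disj_sp_downward:
  assumes "u \<in> right_disj_sp le sle A" and "sle 0 t" and "le t u"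
  shows "t \<in> right_disj_sp le sle A"
proof -
  have "mlow le sle a t = 0" if "a \<in> A \<inter> Vsp sle" for a
  proof (rule le_antisym)
    show "le (mlow le sle a t) 0"
      using mlow_mono_right[OF assms(3), of a] assms(1) that unfolding right_disj_sp_def by auto
    show "le 0 (mlow le sle a t)"
      using that mlow_nonneg sle_imp_le[OF assms(2)] unfolding Vsp_def by auto
  qed
  then show ?thesis using assms(2) unfolding right_disj_sp_def Vsp_def by auto
qed

lemma right_disj_sp_scaleR:
  assumes cone: "\<And>a c. a \<in> A \<Longrightarrow> 0 < c \<Longrightarrow> c *\<^sub>R a \<in> A"
    and "u \<in> right_disj_sp le sle A" and "0 < c"
  shows "c *\<^sub>R u \<in> right_disj_sp le sle A"
proof -
  have "mlow le sle a (c *\<^sub>R u) = 0" if "a \<in> A \<inter> Vsp sle" for a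
  proof -
    have "inverse c *\<^sub>R a \<in> A \<inter> Vsp sle"
      using that cone sle_scaleR[of 0 a "inverse c"] \<open>0 < c\<close> unfolding Vsp_def by auto
    then have "mlow le sle (inverse c *\<^sub>R a) u = 0"
      using assms(2) unfolding right_disj_sp_def by blast
    then show ?thesis
      using mlow_scaleR[OF \<open>0 < c\<close>, of "inverse c *\<^sub>R a" u] \<open>0 < c\<close> by simp
  qed
  then show ?thesis
    using assms(2,3) sle_scaleR[of 0 u c] unfolding right_disj_sp_def Vsp_def by auto
qed

lemma ml_ideal_sabs_vimage_right_disj_sp:
  assumes cone: "\<And>a c. a \<in> A \<Longrightarrow> 0 < c \<Longrightarrow> c *\<^sub>R a \<in> A"
  shows "ml_ideal le sle (sabs le sle -` right_disj_sp le sle A)"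
proof -
  let ?S = "right_disj_sp le sle A" and ?s = "sabs le sle"
  have below: "t \<in> ?s -` ?S" if "le (?s t) u" "u \<in> ?S" for t u
    using right_disj_sp_downward[OF that(2) sabs_sle that(1)] by simp
  have sum3: "?s x + ?s y + ?s y \<in> ?S" if "x \<in> ?s -` ?S" "y \<in> ?s -` ?S" for x y
    using that by (simp add: right_disj_sp_add)
  have zero: "0 \<in> ?s -` ?S"
    using sabs_eq_self[OF sle_refl] zero_mem_right_disj_sp by simp
  have add: "x + y \<in> ?s -` ?S" if "x \<in> ?s -` ?S" "y \<in> ?s -` ?S" for x y
    using that by (intro below[OF sabs_add_le]) (simp add: right_disj_sp_add)
  have scale: "c *\<^sub>R x \<in> ?s -` ?S" if "x \<in> ?s -` ?S" for x c
  proof -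
    have "?s x \<in> ?S" using that by simp
    consider "0 < c" | "c = 0" | "c < 0" by linarith
    then show ?thesis
    proof cases
      case 1
      then show ?thesis using right_disj_sp_scaleR[OF cone \<open>?s x \<in> ?S\<close> 1] by (simp add: sabs_scaleR)
    next
      case 2
      then show ?thesis using zero by simp
    next
      case 3
      then have "0 < - c" by simp
      from right_disj_sp_scaleR[OF cone \<open>?s x \<in> ?S\<close> this] 3
      show ?thesis by (simp add: sabs_scaleR_neg)
    qed
  qed
  have mlow: "mlow le sle x y \<in> ?s -` ?S" if "x \<in> ?s -` ?S" "y \<in> ?s -` ?S" for x y
    by (rule below[OF sabs_mlow_le sum3[OF that]])
  have mup: "mup le sle x y \<in> ?s -` ?S" if "x \<in> ?s -` ?S" "y \<in> ?s -` ?S" for x y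
    by (rule below[OF sabs_mup_le sum3[OF that]])
  have convex: "y \<in> ?s -` ?S" if "x \<in> ?s -` ?S" "z \<in> ?s -` ?S" "le x y" "le y z" for x y z
    using that(1,2) by (intro below[OF sabs_le_of_between[OF that(3,4)]]) (simp add: right_disj_sp_add)
  show ?thesis
    unfolding ml_ideal_def mixed_lattice_subspace_def linear_subspace_def
    by (intro conjI ballI allI impI; (elim conjE)?) (fact zero add scale mlow mup convex)+
qed

lemma right_disj_compl_eq_sabs_vimage:
  assumes cone: "\<And>a c. a \<in> A \<Longrightarrow> 0 < c \<Longrightarrow> c *\<^sub>R a \<in> A"
  shows "right_disj_compl le sle A = sabs le sle -` right_disj_sp le sle A"
proof
  have "right_disj_sp le sle A \<subseteq> sabs le sle -` right_disj_sp le sle A"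
    using sabs_eq_self unfolding right_disj_sp_def Vsp_def by auto
  then show "right_disj_compl le sle A \<subseteq> sabs le sle -` right_disj_sp le sle A"
    unfolding right_disj_compl_eq_Inter
    by (intro Inter_lower) (simp add: ml_ideal_sabs_vimage_right_disj_sp[OF cone])
  show "sabs le sle -` right_disj_sp le sle A \<subseteq> right_disj_compl le sle A"
    unfolding right_disj_compl_eq_Inter using ml_ideal_sabs_mem by blast
qed

lemma sabs_vimage_right_disj_sp:
  assumes "\<And>z. z \<in> A \<Longrightarrow> sabs le sle z \<in> A"
  shows "sabs le sle -` right_disj_sp le sle A =
    {x. \<forall>z\<in>A. mlow le sle (sabs le sle z) (sabs le sle x) = 0}"
proof (rule set_eqI)
  fix x
  have "x \<in> sabs le sle -` right_disj_sp le sle A \<longleftrightarrow>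
      (\<forall>a\<in>A. sle 0 a \<longrightarrow> mlow le sle a (sabs le sle x) = 0)"
    using sabs_sle unfolding right_disj_sp_def Vsp_def by auto
  also have "\<dots> \<longleftrightarrow> (\<forall>z\<in>A. mlow le sle (sabs le sle z) (sabs le sle x) = 0)"
    using assms sabs_sle sabs_eq_self by metis
  finally show "x \<in> sabs le sle -` right_disj_sp le sle A \<longleftrightarrow>
      x \<in> {x. \<forall>z\<in>A. mlow le sle (sabs le sle z) (sabs le sle x) = 0}"
    by simp
qed

end

theorem theorem5p19:
  fixes le sle :: "'a::real_vector \<Rightarrow> 'a \<Rightarrow> bool" and A :: "'a set"
  assumes "mixed_lattice_vs le sle"
    and "quasi_regular le sle"
    and "mixed_lattice_subspace le sle A"
  shows "right_disj_compl le sle A =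
           {x. \<forall>z\<in>A. mlow le sle (sabs le sle z) (sabs le sle x) = 0}"
proof -
  interpret mixed_lattice_space le sle by standard (fact assms(1))
  interpret mixed_lattice_space_sle_le le sle
    by standard (rule quasi_regular_sle_le[OF assms(2)])
  have "\<And>a c. a \<in> A \<Longrightarrow> c *\<^sub>R a \<in> A"
    using assms(3) unfolding mixed_lattice_subspace_def linear_subspace_def by blast
  then show ?thesis
    using right_disj_compl_eq_sabs_vimage sabs_vimage_right_disj_sp
      mixed_lattice_subspace_sabs[OF assms(3)] by simp
qed

end
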